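(* Let $\mathcal A$ be a finite uniform non-associative algebra and $\Rsh$ a projection operator from $\mathcal A$ to another non-associative algebra. If $\Rsh$ is superdistributive over $\diamond$ on the set of atoms of $\mathcal A$, then $\Rsh$ is superdistributive over $\diamond$ on $\mathcal A$.
   Context: A finite non-associative algebra is a tuple $(\mathcal A,\cup,\neg,\emptyset,\mathcal B,\diamond,\overline{\cdot},e)$ where $(\mathcal A,\cup,\neg,\emptyset,\mathcal B)$ is a finite Boolean algebra and for all $x,y,z$: $\overline{\overline x}=x$, $\overline{x\cup y}=\overline x\cup\overline y$, $\overline{x\diamond y}=\overline y\diamond\overline x$, $e\diamond x=x\diamond e=x$, $x\diamond(y\cup z)=(x\diamond y)\cup(x\diamond z)$, $(x\diamond y)\cap\overline z=\emptyset\iff(y\diamond z)\cap\overline x=\emptyset$. $r\subseteq r'$ means $r\cup r'=r'$; atoms are the basic relations. The algebra is uniform if $b\diamond b'\neq\emptyset$ for all atoms $b,b'$. A projection operator from $\mathcal A$ to $\mathcal A'$ is a map $\Rsh$ with $\Rsh(r\cup r')=\Rsh r\cup\Rsh r'$ and $\Rsh\overline r=\overline{\Rsh r}$. $\Rsh$ is superdistributive over $\diamond$ on a subset $X\subseteq\mathcal A$ if for all $r,r'\in X$ with $r\diamond r'\neq\emptyset$, $(\Rsh r)\diamond(\Rsh r')\subseteq\Rsh(r\diamond r')$. *)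

theory Defs
  imports Main
begin

text \<open>A finite non-associative algebra: the Boolean algebra part is the (finite)
  type itself with sup (union), uminus (complement), bot (empty), top;
  cmp is the composition, conv is the converse, e the identity.\<close>

definition nonassoc_alg ::
  "('a::{boolean_algebra,finite} \<Rightarrow> 'a \<Rightarrow> 'a) \<Rightarrow> ('a \<Rightarrow> 'a) \<Rightarrow> 'a \<Rightarrow> bool" where
  "nonassoc_alg cmp conv e \<longleftrightarrow>
     (\<forall>x. conv (conv x) = x) \<and>
     (\<forall>x y. conv (sup x y) = sup (conv x) (conv y)) \<and>
     (\<forall>x y. conv (cmp x y) = cmp (conv y) (conv x)) \<and>
     (\<forall>x. cmp e x = x \<and> cmp x e = x) \<and>
     (\<forall>x y z. cmp x (sup y z) = sup (cmp x y) (cmp x z)) \<and>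
     (\<forall>x y z. inf (cmp x y) (conv z) = bot \<longleftrightarrow> inf (cmp y z) (conv x) = bot)"

definition is_atom :: "'a::boolean_algebra \<Rightarrow> bool" where
  "is_atom b \<longleftrightarrow> b \<noteq> bot \<and> (\<forall>x. x \<le> b \<longrightarrow> x = bot \<or> x = b)"

definition uniform_alg :: "('a::boolean_algebra \<Rightarrow> 'a \<Rightarrow> 'a) \<Rightarrow> bool" where
  "uniform_alg cmp \<longleftrightarrow> (\<forall>b b'. is_atom b \<longrightarrow> is_atom b' \<longrightarrow> cmp b b' \<noteq> bot)"

definition projection_op ::
  "('a::boolean_algebra \<Rightarrow> 'a) \<Rightarrow> ('b::boolean_algebra \<Rightarrow> 'b) \<Rightarrow> ('a \<Rightarrow> 'b) \<Rightarrow> bool" where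
  "projection_op conv conv' P \<longleftrightarrow>
     (\<forall>r r'. P (sup r r') = sup (P r) (P r')) \<and> (\<forall>r. P (conv r) = conv' (P r))"

definition superdistributive_on ::
  "('a::boolean_algebra \<Rightarrow> 'a \<Rightarrow> 'a) \<Rightarrow> ('b::boolean_algebra \<Rightarrow> 'b \<Rightarrow> 'b) \<Rightarrow> ('a \<Rightarrow> 'b) \<Rightarrow> 'a set \<Rightarrow> bool" where
  "superdistributive_on cmp cmp' P X \<longleftrightarrow>
     (\<forall>r\<in>X. \<forall>r'\<in>X. cmp r r' \<noteq> bot \<longrightarrow> cmp' (P r) (P r') \<le> P (cmp r r'))"

end

theory Submission
  imports Defs
begin

text \<open>In a finite Boolean algebra every non-zero element is a finite union of atoms. Since
  composition distributes over union on both sides and the projection preserves unions, the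
  inequality for atoms propagates first to an arbitrary left argument and then to an arbitrary
  right argument. Uniformity guarantees that the hypothesis for atoms is unconditional, and a
  non-empty composition has non-empty arguments.\<close>

lemma nonbot_induct [consumes 1, case_names atom sup]:
  fixes x :: "'a::{boolean_algebra,finite}"
  assumes "x \<noteq> bot"
    and atom: "\<And>b. is_atom b \<Longrightarrow> Q b"
    and sup: "\<And>x y. x \<noteq> bot \<Longrightarrow> y \<noteq> bot \<Longrightarrow> Q x \<Longrightarrow> Q y \<Longrightarrow> Q (sup x y)"
  shows "Q x"
  using assms(1)
proof (induction "card {y. y < x}" arbitrary: x rule: less_induct)
  case less
  show ?case
  proof (cases "is_atom x")
    case True
    then show ?thesis by (rule atom)
  next
    case False
    with less.prems obtain y where "y \<le> x" "y \<noteq> bot" "y \<noteq> x"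
      unfolding is_atom_def by auto
    have card_less: "card {z. z < w} < card {z. z < x}" if "w < x" for w
      by (rule psubset_card_mono) (use that in auto)
    define z where "z = inf x (- y)"
    have "z \<noteq> bot"
      unfolding z_def using \<open>y \<le> x\<close> \<open>y \<noteq> x\<close>
      by (metis inf_shunt double_compl order.antisym)
    have "z < x"
      unfolding z_def using \<open>y \<le> x\<close> \<open>y \<noteq> bot\<close>
      by (metis inf_compl_bot_right inf.orderE less_le inf_le1)
    have "x = sup y z"
      unfolding z_def using \<open>y \<le> x\<close> by (simp add: sup_inf_distrib1 sup.absorb2)
    moreover have "Q y"
      using less.hyps[OF card_less] \<open>y \<le> x\<close> \<open>y \<noteq> x\<close> \<open>y \<noteq> bot\<close> by simp
    moreover have "Q z"
      using less.hyps[OF card_less] \<open>z < x\<close> \<open>z \<noteq> bot\<close> by simp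
    ultimately show ?thesis
      using sup \<open>y \<noteq> bot\<close> \<open>z \<noteq> bot\<close> by simp
  qed
qed

lemma nonassoc_alg_sup_right:
  "nonassoc_alg cmp conv e \<Longrightarrow> cmp x (sup y z) = sup (cmp x y) (cmp x z)"
  unfolding nonassoc_alg_def by blast

lemma nonassoc_alg_sup_left:
  assumes "nonassoc_alg cmp conv e"
  shows "cmp (sup y z) x = sup (cmp y x) (cmp z x)"
proof -
  have "conv (conv a) = a" "conv (sup a b) = sup (conv a) (conv b)"
    "conv (cmp a b) = cmp (conv b) (conv a)" for a b
    using assms unfolding nonassoc_alg_def by blast+
  with nonassoc_alg_sup_right[OF assms] show ?thesis by metis
qed

lemma nonassoc_alg_conv_bot:
  assumes "nonassoc_alg cmp conv e"
  shows "conv bot = bot"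
proof -
  have conv_conv: "conv (conv a) = a" and conv_sup: "conv (sup a b) = sup (conv a) (conv b)" for a b
    using assms unfolding nonassoc_alg_def by blast+
  have "conv bot \<le> conv (conv bot)"
    by (metis conv_sup bot.extremum le_iff_sup)
  then show ?thesis by (simp add: conv_conv bot_unique)
qed

lemma nonassoc_alg_bot_left:
  assumes "nonassoc_alg cmp conv e"
  shows "cmp bot x = bot"
proof -
  have conv_conv: "conv (conv a) = a" for a
    using assms unfolding nonassoc_alg_def by blast
  have "inf (cmp bot x) (conv (conv top)) = bot \<longleftrightarrow> inf (cmp x (conv top)) (conv bot) = bot"
    using assms unfolding nonassoc_alg_def by blast
  then show ?thesis by (simp add: conv_conv nonassoc_alg_conv_bot[OF assms])
qed

lemma nonassoc_alg_bot_right: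
  assumes "nonassoc_alg cmp conv e"
  shows "cmp x bot = bot"
proof -
  have "conv (conv a) = a" "conv (cmp a b) = cmp (conv b) (conv a)" for a b
    using assms unfolding nonassoc_alg_def by blast+
  with nonassoc_alg_conv_bot[OF assms] nonassoc_alg_bot_left[OF assms] show ?thesis by metis
qed

lemma superdistributive_nonbot_if_atoms:
  fixes cmp :: "'a::{boolean_algebra,finite} \<Rightarrow> 'a \<Rightarrow> 'a"
    and cmp' :: "'b::boolean_algebra \<Rightarrow> 'b \<Rightarrow> 'b" and P :: "'a \<Rightarrow> 'b"
  assumes cmp_sup_left: "\<And>x y z. cmp (sup y z) x = sup (cmp y x) (cmp z x)"
    and cmp_sup_right: "\<And>x y z. cmp x (sup y z) = sup (cmp x y) (cmp x z)"
    and cmp'_sup_left: "\<And>x y z. cmp' (sup y z) x = sup (cmp' y x) (cmp' z x)"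
    and cmp'_sup_right: "\<And>x y z. cmp' x (sup y z) = sup (cmp' x y) (cmp' x z)"
    and P_sup: "\<And>r s. P (sup r s) = sup (P r) (P s)"
    and atoms: "\<And>b b'. is_atom b \<Longrightarrow> is_atom b' \<Longrightarrow> cmp' (P b) (P b') \<le> P (cmp b b')"
    and "r \<noteq> bot" "r' \<noteq> bot"
  shows "cmp' (P r) (P r') \<le> P (cmp r r')"
proof -
  have atom_right: "cmp' (P r) (P b') \<le> P (cmp r b')" if "r \<noteq> bot" "is_atom b'" for r b'
    using \<open>r \<noteq> bot\<close>
  proof (induction r rule: nonbot_induct)
    case (atom b)
    then show ?case using atoms \<open>is_atom b'\<close> by blast
  next
    case (sup x y)
    have "cmp' (P (sup x y)) (P b') = sup (cmp' (P x) (P b')) (cmp' (P y) (P b'))"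
      by (simp add: P_sup cmp'_sup_left)
    also have "\<dots> \<le> sup (P (cmp x b')) (P (cmp y b'))"
      using sup.IH by (rule sup_mono)
    also have "\<dots> = P (cmp (sup x y) b')"
      by (simp add: P_sup cmp_sup_left)
    finally show ?case .
  qed
  show ?thesis
    using \<open>r' \<noteq> bot\<close>
  proof (induction r' rule: nonbot_induct)
    case (atom b')
    then show ?case using atom_right \<open>r \<noteq> bot\<close> by blast
  next
    case (sup x y)
    have "cmp' (P r) (P (sup x y)) = sup (cmp' (P r) (P x)) (cmp' (P r) (P y))"
      by (simp add: P_sup cmp'_sup_right)
    also have "\<dots> \<le> sup (P (cmp r x)) (P (cmp r y))"
      using sup.IH by (rule sup_mono)
    also have "\<dots> = P (cmp r (sup x y))"
      by (simp add: P_sup cmp_sup_right)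
    finally show ?case .
  qed
qed

theorem proposition6p12:
  fixes cmp :: "'a::{boolean_algebra,finite} \<Rightarrow> 'a \<Rightarrow> 'a" and conv :: "'a \<Rightarrow> 'a" and e :: 'a
    and cmp' :: "'b::{boolean_algebra,finite} \<Rightarrow> 'b \<Rightarrow> 'b" and conv' :: "'b \<Rightarrow> 'b" and e' :: 'b
    and P :: "'a \<Rightarrow> 'b"
  assumes "nonassoc_alg cmp conv e"
    and "uniform_alg cmp"
    and "nonassoc_alg cmp' conv' e'"
    and "projection_op conv conv' P"
    and "superdistributive_on cmp cmp' P {b. is_atom b}"
  shows "superdistributive_on cmp cmp' P UNIV"
  unfolding superdistributive_on_def
proof (intro ballI impI)
  fix r r' :: 'a
  assume "cmp r r' \<noteq> bot"
  then have "r \<noteq> bot" "r' \<noteq> bot"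
    using nonassoc_alg_bot_left[OF assms(1)] nonassoc_alg_bot_right[OF assms(1)] by auto
  have atoms: "cmp' (P b) (P b') \<le> P (cmp b b')" if "is_atom b" "is_atom b'" for b b'
    using assms(2,5) that unfolding uniform_alg_def superdistributive_on_def by blast
  have P_sup: "P (sup r s) = sup (P r) (P s)" for r s
    using assms(4) unfolding projection_op_def by blast
  show "cmp' (P r) (P r') \<le> P (cmp r r')"
    using nonassoc_alg_sup_left[OF assms(1)] nonassoc_alg_sup_right[OF assms(1)]
      nonassoc_alg_sup_left[OF assms(3)] nonassoc_alg_sup_right[OF assms(3)] P_sup atoms
      \<open>r \<noteq> bot\<close> \<open>r' \<noteq> bot\<close>
    by (rule superdistributive_nonbot_if_atoms)
qed

end
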